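(* Let $n\ge 1$, let $n_0>0$ and $N_+\in\mathbb{R}^n$ with positive entries, let $M_1\in\mathbb{R}$, and let $L_R\in\mathbb{R}^n$ have finite entries. For $A\in\mathbb{R}^n$ set $a_0(A)=M_1-\mathbf{1}^\top A$ and $$H(A)=A^\top\big(-L_R-\log(N_+)+\mathbf{1}\log(n_0)\big)+\sum_{i=1}^n\big(A_i\log A_i-A_i\big)+a_0(A)\log(a_0(A))-a_0(A),$$ with $\log(N_+)$ taken componentwise and the convention $0\log 0=0$, defined on $\{A\in\mathbb{R}^n: A\ge 0,\ a_0(A)\ge 0\}$. Suppose that some $A\in\mathbb{R}^n$ with $A\ge 0$ satisfies $M_1>\mathbf{1}^\top A$. Then $H$ has a unique minimizer over $A\in\mathbb{R}^n_+$ (within its domain).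
   Context: This is the Greenland–Longnecker pseudo-count problem for log relative risks: $n$ alternative exposure levels, $n_0$ total subjects at the reference exposure, $N_+$ total subjects at the alternative exposures, $M_1$ total cases, $L_R$ reported log relative risks; $A$ are pseudo-cases at alternative exposures and $a_0$ pseudo-cases at the reference exposure. The gradient of $H$ is $-L_R+\log(A)-\log(N_+)-\log(a_0(A))\mathbf{1}+\log(n_0)\mathbf{1}$. $\mathbf{1}$ denotes the all-ones vector. *)

theory Defs
  imports "HOL-Analysis.Analysis"
begin

definition xlogx :: "real \<Rightarrow> real" where
  "xlogx t = (if t = 0 then 0 else t * ln t)"

definition a0 :: "real \<Rightarrow> real ^ 'n \<Rightarrow> real" where
  "a0 M1 A = M1 - (\<Sum>i\<in>UNIV. A $ i)"

definition GL_H :: "real \<Rightarrow> real ^ 'n \<Rightarrow> real \<Rightarrow> real ^ 'n \<Rightarrow> real ^ 'n \<Rightarrow> real" where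
  "GL_H n0 Nplus M1 LR A =
     (\<Sum>i\<in>UNIV. A $ i * (- LR $ i - ln (Nplus $ i) + ln n0))
     + (\<Sum>i\<in>UNIV. xlogx (A $ i) - A $ i)
     + xlogx (a0 M1 A) - a0 M1 A"

definition GL_dom :: "real \<Rightarrow> (real ^ 'n) set" where
  "GL_dom M1 = {A. (\<forall>i. 0 \<le> A $ i) \<and> 0 \<le> a0 M1 A}"

end

theory Submission
  imports Defs "HOL-Real_Asymp.Real_Asymp"
begin

text \<open>
  H is a linear function plus the strictly convex entropy terms \<open>A\<^sub>i log A\<^sub>i\<close>, plus the
  convex term \<open>a\<^sub>0 log a\<^sub>0\<close> composed with an affine map, so H is strictly convex on its
  domain, a compact convex polytope. Being continuous there (as \<open>t log t \<rightarrow> 0\<close> at \<open>0\<^sup>+\<close>),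
  it attains its minimum, and two distinct minimizers would make H smaller at their midpoint.
\<close>

lemma xlogx_altdef: "xlogx = (\<lambda>t. t * ln t)"
  by (simp add: fun_eq_iff xlogx_def)

text \<open>\<open>t ln m + (t - m)\<close> is the tangent line of \<open>t ln t\<close> at \<open>m\<close>.\<close>

lemma xlogx_gt_tangent:
  fixes m t :: real
  assumes "0 < m" "0 \<le> t" "t \<noteq> m"
  shows "t * ln m + (t - m) < xlogx t"
proof (cases "t = 0")
  case True
  then show ?thesis using assms by (simp add: xlogx_def)
next
  case False
  then have "0 < t" using assms by simp
  then have "t * (ln m - ln t) < m - t"
    using ln_diff_less[OF \<open>0 < m\<close> \<open>0 < t\<close>] assms by (simp add: field_simps)
  then show ?thesis by (simp add: xlogx_altdef algebra_simps)
qed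

lemma xlogx_ge_tangent:
  fixes m t :: real
  assumes "0 < m" "0 \<le> t"
  shows "t * ln m + (t - m) \<le> xlogx t"
  using xlogx_gt_tangent[OF assms] by (cases "t = m") (auto simp: xlogx_altdef)

lemma xlogx_midpoint_less:
  fixes x y :: real
  assumes "0 \<le> x" "0 \<le> y" "x \<noteq> y"
  shows "2 * xlogx (midpoint x y) < xlogx x + xlogx y"
proof -
  define m where "m = midpoint x y"
  have "0 < m" "x \<noteq> m" using assms by (auto simp: m_def midpoint_def)
  then have "x * ln m + (x - m) + (y * ln m + (y - m)) < xlogx x + xlogx y"
    using xlogx_gt_tangent[of m x] xlogx_ge_tangent[of m y] assms by linarith
  moreover have "x * ln m + (x - m) + (y * ln m + (y - m)) = 2 * xlogx m"
    by (simp add: m_def midpoint_def xlogx_altdef algebra_simps)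
  ultimately show ?thesis by (simp add: m_def)
qed

lemma xlogx_midpoint_le:
  fixes x y :: real
  assumes "0 \<le> x" "0 \<le> y"
  shows "2 * xlogx (midpoint x y) \<le> xlogx x + xlogx y"
  using xlogx_midpoint_less[OF assms] by (cases "x = y") auto

lemma continuous_on_xlogx: "continuous_on {0..} xlogx"
  unfolding continuous_on_eq_continuous_within
proof
  fix t :: real
  assume "t \<in> {0..}"
  show "continuous (at t within {0..}) xlogx"
  proof (cases "t = 0")
    case True
    have "((\<lambda>t::real. t * ln t) \<longlongrightarrow> 0) (at_right 0)"
      by real_asymp
    then show ?thesis
      using True by (simp add: continuous_within at_within_Ici_at_right xlogx_altdef)
  next
    case False
    then have "isCont xlogx t"
      unfolding xlogx_altdef using \<open>t \<in> {0..}\<close> by (intro continuous_intros) auto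
    then show ?thesis
      using continuous_at_imp_continuous_at_within by blast
  qed
qed

lemma ex1_minimizer_strict_midpoint_convex:
  fixes f :: "'a::real_normed_vector \<Rightarrow> real"
  assumes "compact S" "convex S" "S \<noteq> {}" "continuous_on S f"
    and strict: "\<And>x y. x \<in> S \<Longrightarrow> y \<in> S \<Longrightarrow> x \<noteq> y \<Longrightarrow> 2 * f (midpoint x y) < f x + f y"
  shows "\<exists>!x. x \<in> S \<and> (\<forall>y\<in>S. f x \<le> f y)"
proof (rule ex_ex1I)
  show "\<exists>x. x \<in> S \<and> (\<forall>y\<in>S. f x \<le> f y)"
    using continuous_attains_inf[OF assms(1,3,4)] by blast
next
  fix x y
  assume x: "x \<in> S \<and> (\<forall>z\<in>S. f x \<le> f z)" and y: "y \<in> S \<and> (\<forall>z\<in>S. f y \<le> f z)"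
  have "midpoint x y \<in> S"
    using closed_segment_subset[OF _ _ \<open>convex S\<close>] midpoint_in_closed_segment x y by blast
  then have "f x + f y \<le> 2 * f (midpoint x y)"
    using x y by force
  then show "x = y"
    using strict x y by force
qed

lemma a0_midpoint: "a0 M1 (midpoint A B) = midpoint (a0 M1 A) (a0 M1 B)"
  unfolding a0_def midpoint_def
  by (simp add: sum_divide_distrib[symmetric] sum.distrib field_simps)

lemma zero_in_GL_dom: "0 \<le> M1 \<Longrightarrow> 0 \<in> GL_dom M1"
  by (simp add: GL_dom_def a0_def)

lemma convex_GL_dom: "convex (GL_dom M1)"
  unfolding convex_def GL_dom_def a0_def
  by (auto simp: sum.distrib sum_distrib_left[symmetric] intro: convex_bound_le)

lemma GL_dom_subset_cbox: "GL_dom M1 \<subseteq> cbox 0 (\<chi> i. M1)"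
proof
  fix A :: "real ^ 'n"
  assume "A \<in> GL_dom M1"
  then have nonneg: "\<forall>i. 0 \<le> A $ i" and "(\<Sum>i\<in>UNIV. A $ i) \<le> M1"
    by (auto simp: GL_dom_def a0_def)
  then have "A $ i \<le> M1" for i
    using member_le_sum[of i UNIV "\<lambda>i. A $ i"] by auto
  then show "A \<in> cbox 0 (\<chi> i. M1)"
    using nonneg by (simp add: mem_box_cart)
qed

lemma compact_GL_dom: "compact (GL_dom M1)"
proof -
  have "closed (GL_dom M1)"
    unfolding GL_dom_def a0_def
    by (intro closed_Collect_all closed_Collect_le closed_Collect_conj continuous_intros)
  then show ?thesis
    using GL_dom_subset_cbox bounded_cbox bounded_subset compact_eq_bounded_closed by metis
qed

lemma continuous_on_GL_H: "continuous_on (GL_dom M1) (GL_H n0 Nplus M1 LR)"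
proof -
  have a0: "continuous_on (GL_dom M1) (a0 M1)"
    unfolding a0_def by (intro continuous_intros)
  have "continuous_on (GL_dom M1) (\<lambda>A. xlogx (A $ i))" for i
    by (rule continuous_on_compose2[OF continuous_on_xlogx])
      (auto simp: GL_dom_def intro: continuous_intros)
  moreover have "continuous_on (GL_dom M1) (\<lambda>A. xlogx (a0 M1 A))"
    by (rule continuous_on_compose2[OF continuous_on_xlogx a0]) (auto simp: GL_dom_def)
  ultimately show ?thesis
    unfolding GL_H_def by (intro continuous_intros a0)
qed

lemma GL_H_midpoint_less:
  assumes "A \<in> GL_dom M1" "B \<in> GL_dom M1" "A \<noteq> B"
  shows "2 * GL_H n0 Nplus M1 LR (midpoint A B) < GL_H n0 Nplus M1 LR A + GL_H n0 Nplus M1 LR B"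
proof -
  define c where "c i = - LR $ i - ln (Nplus $ i) + ln n0" for i
  define C where "C = midpoint A B"
  have C: "C $ i = midpoint (A $ i) (B $ i)" for i
    by (simp add: C_def midpoint_def)
  have nonneg: "0 \<le> A $ i" "0 \<le> B $ i" "0 \<le> a0 M1 A" "0 \<le> a0 M1 B" for i
    using assms(1,2) by (auto simp: GL_dom_def)
  obtain j where "A $ j \<noteq> B $ j"
    using assms(3) by (auto simp: vec_eq_iff)
  have linear: "2 * (\<Sum>i\<in>UNIV. C $ i * c i) = (\<Sum>i\<in>UNIV. A $ i * c i) + (\<Sum>i\<in>UNIV. B $ i * c i)"
    by (simp add: C midpoint_def sum_distrib_left sum.distrib[symmetric] algebra_simps)
  have entropy_le: "2 * (xlogx (C $ i) - C $ i) \<le> (xlogx (A $ i) - A $ i) + (xlogx (B $ i) - B $ i)"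
    for i
    using xlogx_midpoint_le[OF nonneg(1,2)[of i]] by (simp add: C midpoint_def field_simps)
  have entropy_less: "2 * (xlogx (C $ j) - C $ j) < (xlogx (A $ j) - A $ j) + (xlogx (B $ j) - B $ j)"
    using xlogx_midpoint_less[OF nonneg(1,2)[of j] \<open>A $ j \<noteq> B $ j\<close>]
    by (simp add: C midpoint_def field_simps)
  have "(\<Sum>i\<in>UNIV. 2 * (xlogx (C $ i) - C $ i))
      < (\<Sum>i\<in>UNIV. (xlogx (A $ i) - A $ i) + (xlogx (B $ i) - B $ i))"
    using entropy_le entropy_less by (intro sum_strict_mono_ex1) auto
  then have entropy: "2 * (\<Sum>i\<in>UNIV. xlogx (C $ i) - C $ i)
      < (\<Sum>i\<in>UNIV. xlogx (A $ i) - A $ i) + (\<Sum>i\<in>UNIV. xlogx (B $ i) - B $ i)"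
    by (simp add: sum_distrib_left sum.distrib)
  have reference: "2 * (xlogx (a0 M1 C) - a0 M1 C)
      \<le> (xlogx (a0 M1 A) - a0 M1 A) + (xlogx (a0 M1 B) - a0 M1 B)"
    using xlogx_midpoint_le[OF nonneg(3,4)] unfolding C_def a0_midpoint
    by (simp add: midpoint_def field_simps)
  show ?thesis
    using linear entropy reference unfolding GL_H_def C_def[symmetric] c_def[symmetric]
    by (simp add: algebra_simps)
qed

theorem theorem2:
  fixes n0 M1 :: real and Nplus LR :: "real ^ 'n"
  assumes "n0 > 0"
    and "\<forall>i. Nplus $ i > 0"
    and "\<exists>A :: real ^ 'n. (\<forall>i. 0 \<le> A $ i) \<and> M1 > (\<Sum>i\<in>UNIV. A $ i)"
  shows "\<exists>!A. A \<in> GL_dom M1 \<and> (\<forall>B \<in> GL_dom M1. GL_H n0 Nplus M1 LR A \<le> GL_H n0 Nplus M1 LR B)"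
proof -
  txt \<open>The feasible point only serves to make the domain nonempty.\<close>
  obtain A :: "real ^ 'n" where "\<forall>i. 0 \<le> A $ i" "(\<Sum>i\<in>UNIV. A $ i) < M1"
    using assms(3) by blast
  then have "0 \<le> M1"
    using sum_nonneg[of UNIV "\<lambda>i. A $ i"] by force
  then show ?thesis
    by (intro ex1_minimizer_strict_midpoint_convex compact_GL_dom convex_GL_dom
        continuous_on_GL_H GL_H_midpoint_less) (auto dest: zero_in_GL_dom)
qed

end
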